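(* Consider the "AME(3,d) quantum bit commitment" protocol described in the context, for any integer $d\ge 2$. Then: (i) (Perfect hiding) Suppose Alice chooses $b\in\{0,1\}$ uniformly at random and follows the commit phase honestly. Then, whatever state Bob prepares in Step 1 (an arbitrary, possibly dishonest, state on $\texttt{anc}\otimes\mathcal{A}\otimes\mathcal{B}$, with $\mathcal B$ possibly enlarged by an arbitrary register of Bob), Bob cannot guess $b$ before the opening phase with probability larger than $1/2$. Equivalently, the commit channels $\mathcal M_0$ and $\mathcal M_1$ defined in the context satisfy $\mathcal M_0(\rho)=\mathcal M_1(\rho)$ for every state $\rho$. (ii) ($1/d$-honest-binding) If Alice is restricted to separable operations on her register $\mathcal{A}$, then $\max\{p_s(0),p_s(1)\}\le 1/d$, where $p_s(b)$ is defined in the context.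
   Context: Let $d\ge2$, $\omega=e^{2\pi i/d}$, and let $\{|k\rangle\}_{k=0}^{d-1}$ be the computational basis of $\mathbb C^d$ (arithmetic on labels mod $d$). Define $|\tilde k\rangle=\frac{1}{\sqrt d}\sum_{l=0}^{d-1}\omega^{-kl}|l\rangle$. For a permutation $\pi\in S_d$ of $\{0,\dots,d-1\}$ set $\mathbf B_{1,\pi}=\{|\pi(k)\rangle\}_k$ and $\mathbf B_{0,\pi}=\{|\widetilde{\pi(k)}\rangle\}_k$. Registers: $\texttt{anc}\cong\mathbb C^d$; Alice's register $\mathcal A=(\mathbb C^d)^{\otimes 3}$ (three qudits); Bob's register $\mathcal B\cong\mathbb C^d$. For $l\in\{0,\dots,d-1\}$ let $|\Phi_l\rangle=\frac1{\sqrt d}\sum_{j=0}^{d-1}\omega^{jl}|jjj\rangle_{\mathcal A}|j+l\rangle_{\mathcal B}$. Protocol. Commit phase: (1) Bob prepares $|\Xi\rangle=\frac1{\sqrt d}\sum_{l=0}^{d-1}|l\rangle_{\texttt{anc}}|\Phi_l\rangle_{\mathcal A\mathcal B}$ and sends registers $\texttt{anc}$ and $\mathcal A$ to Alice. (2) Alice picks $\pi\in S_d$ uniformly at random and a bit $b$; to commit $b$ she measures $\texttt{anc}$ in basis $\mathbf B_{b,\pi}$, obtains the basis element with index $m$ (i.e. $|\pi(m)\rangle$ or $|\widetilde{\pi(m)}\rangle$), and announces $m$. In the honest case the resulting state on $\mathcal A\mathcal B$ is $|\Xi^1_{\pi,m}\rangle=|\Phi_{\pi(m)}\rangle$ if $b=1$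 and $|\Xi^0_{\pi,m}\rangle=\frac1{\sqrt d}\sum_{l=0}^{d-1}\omega^{\pi(m)l}|\Phi_l\rangle$ if $b=0$. Opening phase: (3) Alice announces a bit $b'$ and a permutation $\pi'$ and sends register $\mathcal A$ to Bob. (4) Bob projects the state of $\mathcal A\mathcal B$ onto $|\Xi^{b'}_{\pi',m}\rangle$ and accepts iff the projection succeeds. Commit channels (acting on $\texttt{anc}\otimes\mathcal A\otimes\mathcal B$, outcome recorded as $|m\rangle$ in $\texttt{anc}$): $\mathcal M_0(\rho)=\frac1{d!}\sum_{\pi\in S_d}\sum_{m}(|m\rangle\langle\widetilde{\pi(m)}|\otimes I)\rho(|\widetilde{\pi(m)}\rangle\langle m|\otimes I)$ and $\mathcal M_1(\rho)=\frac1{d!}\sum_{\pi\in S_d}\sum_m(|m\rangle\langle\pi(m)|\otimes I)\rho(|\pi(m)\rangle\langle m|\otimes I)$. Separable operations: a channel on $\mathcal A$ is separable with respect to a bipartition $\mathcal A=\mathcal A_1\otimes\mathcal A_2$ (a split of the three qudits into two nonempty groups) if it is a trace-preserving convex combination of tensor products $\mathcal N_1\otimes\mathcal N_2$ of completely positive maps on $\mathcal A_1$ and $\mathcal A_2$; "Alice is restricted to separable operations" means that any channel she applies to $\mathcal A$ is separable with respect to some such bipartition (of her choice). Honest-binding: for $b\in\{0,1\}$, $p_s(b)$ is the probability that Alice, having honestly committed to $b$ (with some $\pi$ and outcome $m$), successfully opens $1-b$, i.e. the maximum over allowed channels $\mathcal N$ on $\mathcal A$ and announced permutations $\pi'$ of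 the acceptance probability $F\big(|\Xi^{1-b}_{\pi',m}\rangle\langle\Xi^{1-b}_{\pi',m}|,(\mathcal N\otimes\mathrm{id}_{\mathcal B})(|\Xi^b_{\pi,m}\rangle\langle\Xi^b_{\pi,m}|)\big)$, where $F$ is the fidelity ($F(\rho,\sigma)=(\mathrm{Tr}\sqrt{\sqrt\sigma\rho\sqrt\sigma})^2$); the bound is required for all $\pi,m$. A protocol is $\varepsilon$-honest-binding if $\max\{p_s(0),p_s(1)\}\le\varepsilon$. *)

theory Defs
  imports Complex_Main "HOL-Combinatorics.Permutations"
begin

text \<open>Operators are represented as functions from pairs of basis labels to complex
numbers; the relevant Hilbert space is spanned by a finite carrier set S of labels.
A qudit has labels 0..<d; composite systems have tuple labels.\<close>

definition omega :: "nat \<Rightarrow> complex" where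
  "omega d = cis (2 * pi / real d)"

definition ket :: "nat \<Rightarrow> nat \<Rightarrow> complex" where
  "ket k = (\<lambda>l. if l = k then 1 else 0)"

definition fket :: "nat \<Rightarrow> nat \<Rightarrow> nat \<Rightarrow> complex" where
  "fket d k = (\<lambda>x. complex_of_real (1 / sqrt (real d)) *
                    (\<Sum>l<d. (inverse (omega d)) ^ (k * l) * ket l x))"

definition outer :: "('a \<Rightarrow> complex) \<Rightarrow> ('a \<Rightarrow> complex) \<Rightarrow> 'a \<Rightarrow> 'a \<Rightarrow> complex" where
  "outer u v = (\<lambda>i j. u i * cnj (v j))"

definition tensor_op :: "('a \<Rightarrow> 'a \<Rightarrow> complex) \<Rightarrow> ('b \<Rightarrow> 'b \<Rightarrow> complex)
    \<Rightarrow> ('a \<times> 'b) \<Rightarrow> ('a \<times> 'b) \<Rightarrow> complex" where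
  "tensor_op X Y = (\<lambda>i j. X (fst i) (fst j) * Y (snd i) (snd j))"

definition id_op :: "'a set \<Rightarrow> 'a \<Rightarrow> 'a \<Rightarrow> complex" where
  "id_op S = (\<lambda>i j. if i = j \<and> i \<in> S then 1 else 0)"

definition mmult :: "'a set \<Rightarrow> ('a \<Rightarrow> 'a \<Rightarrow> complex) \<Rightarrow> ('a \<Rightarrow> 'a \<Rightarrow> complex)
    \<Rightarrow> 'a \<Rightarrow> 'a \<Rightarrow> complex" where
  "mmult S X Y = (\<lambda>i k. \<Sum>j\<in>S. X i j * Y j k)"

definition adj :: "('a \<Rightarrow> 'a \<Rightarrow> complex) \<Rightarrow> 'a \<Rightarrow> 'a \<Rightarrow> complex" where
  "adj X = (\<lambda>i j. cnj (X j i))"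

definition tr :: "'a set \<Rightarrow> ('a \<Rightarrow> 'a \<Rightarrow> complex) \<Rightarrow> complex" where
  "tr S X = (\<Sum>i\<in>S. X i i)"

definition density :: "'a set \<Rightarrow> ('a \<Rightarrow> 'a \<Rightarrow> complex) \<Rightarrow> bool" where
  "density S \<rho> \<longleftrightarrow>
     (\<forall>i j. (i \<notin> S \<or> j \<notin> S) \<longrightarrow> \<rho> i j = 0) \<and>
     (\<forall>v. (\<Sum>i\<in>S. \<Sum>j\<in>S. cnj (v i) * \<rho> i j * v j) \<in> \<real> \<and>
          Re (\<Sum>i\<in>S. \<Sum>j\<in>S. cnj (v i) * \<rho> i j * v j) \<ge> 0) \<and>
     tr S \<rho> = 1"

definition bvec :: "nat \<Rightarrow> nat \<Rightarrow> nat \<Rightarrow> nat \<Rightarrow> complex" where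
  "bvec d b k = (if b = 0 then fket d k else ket k)"

text \<open>Commit channel M_b acting on anc (x) R, R an arbitrary finite register with
label set T (R = A (x) B (x) Bob's extra registers).\<close>
definition commit_chan :: "nat \<Rightarrow> 'r set \<Rightarrow> nat \<Rightarrow> ((nat \<times> 'r) \<Rightarrow> (nat \<times> 'r) \<Rightarrow> complex)
    \<Rightarrow> (nat \<times> 'r) \<Rightarrow> (nat \<times> 'r) \<Rightarrow> complex" where
  "commit_chan d T b \<rho> = (\<lambda>i j. (1 / of_nat (fact d)) *
     (\<Sum>\<pi>\<in>{\<pi>. \<pi> permutes {..<d}}. \<Sum>m<d.
        mmult ({..<d} \<times> T)
          (mmult ({..<d} \<times> T) (tensor_op (outer (ket m) (bvec d b (\<pi> m))) (id_op T)) \<rho>)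
          (tensor_op (outer (bvec d b (\<pi> m)) (ket m)) (id_op T)) i j))"

text \<open>Alice's register A: three qudits; Bob's register B: one qudit.\<close>
definition carA :: "nat \<Rightarrow> (nat \<times> nat \<times> nat) set" where
  "carA d = {..<d} \<times> {..<d} \<times> {..<d}"

definition carAB :: "nat \<Rightarrow> ((nat \<times> nat \<times> nat) \<times> nat) set" where
  "carAB d = carA d \<times> {..<d}"

definition ket3 :: "nat \<Rightarrow> nat \<times> nat \<times> nat \<Rightarrow> complex" where
  "ket3 j = (\<lambda>(a1, a2, a3). ket j a1 * ket j a2 * ket j a3)"

definition Phi :: "nat \<Rightarrow> nat \<Rightarrow> (nat \<times> nat \<times> nat) \<times> nat \<Rightarrow> complex" where
  "Phi d l = (\<lambda>(a, k). complex_of_real (1 / sqrt (real d)) *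
                (\<Sum>j<d. omega d ^ (j * l) * ket3 j a * ket ((j + l) mod d) k))"

definition Xi :: "nat \<Rightarrow> nat \<Rightarrow> (nat \<Rightarrow> nat) \<Rightarrow> nat \<Rightarrow> (nat \<times> nat \<times> nat) \<times> nat \<Rightarrow> complex" where
  "Xi d b \<pi> m = (if b = 1 then Phi d (\<pi> m)
     else (\<lambda>x. complex_of_real (1 / sqrt (real d)) *
               (\<Sum>l<d. omega d ^ (\<pi> m * l) * Phi d l x)))"

text \<open>Bipartitions of the three qudits of A: qudit s alone versus the other two.\<close>
definition split3 :: "nat \<Rightarrow> nat \<times> nat \<times> nat \<Rightarrow> nat \<times> (nat \<times> nat)" where
  "split3 s = (\<lambda>(a1, a2, a3). if s = 0 then (a1, (a2, a3))
                               else if s = 1 then (a2, (a1, a3)) else (a3, (a1, a2)))"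

definition prod_op :: "nat \<Rightarrow> (nat \<Rightarrow> nat \<Rightarrow> complex) \<Rightarrow> (nat \<times> nat \<Rightarrow> nat \<times> nat \<Rightarrow> complex)
    \<Rightarrow> nat \<times> nat \<times> nat \<Rightarrow> nat \<times> nat \<times> nat \<Rightarrow> complex" where
  "prod_op s K L = (\<lambda>a a'. K (fst (split3 s a)) (fst (split3 s a')) *
                           L (snd (split3 s a)) (snd (split3 s a')))"

text \<open>(N1 (x) N2)(X) for CP maps N1, N2 given by Kraus operator lists Ks, Ls.\<close>
definition prod_map :: "nat \<Rightarrow> nat \<Rightarrow> (nat \<Rightarrow> nat \<Rightarrow> complex) list
    \<Rightarrow> (nat \<times> nat \<Rightarrow> nat \<times> nat \<Rightarrow> complex) list
    \<Rightarrow> (nat \<times> nat \<times> nat \<Rightarrow> nat \<times> nat \<times> nat \<Rightarrow> complex)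
    \<Rightarrow> nat \<times> nat \<times> nat \<Rightarrow> nat \<times> nat \<times> nat \<Rightarrow> complex" where
  "prod_map d s Ks Ls X = (\<lambda>a a'. \<Sum>K\<leftarrow>Ks. \<Sum>L\<leftarrow>Ls.
      mmult (carA d) (mmult (carA d) (prod_op s K L) X) (adj (prod_op s K L)) a a')"

definition separable_channel :: "nat \<Rightarrow> ((nat \<times> nat \<times> nat \<Rightarrow> nat \<times> nat \<times> nat \<Rightarrow> complex)
    \<Rightarrow> nat \<times> nat \<times> nat \<Rightarrow> nat \<times> nat \<times> nat \<Rightarrow> complex) \<Rightarrow> bool" where
  "separable_channel d N \<longleftrightarrow>
     (\<exists>s<3. \<exists>fam :: (real \<times> (nat \<Rightarrow> nat \<Rightarrow> complex) list
                           \<times> (nat \<times> nat \<Rightarrow> nat \<times> nat \<Rightarrow> complex) list) list.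
        (\<forall>(p, Ks, Ls) \<in> set fam. p \<ge> 0) \<and>
        sum_list (map fst fam) = 1 \<and>
        (\<forall>X. N X = (\<lambda>a a'. sum_list (map (\<lambda>(p, Ks, Ls).
                        complex_of_real p * prod_map d s Ks Ls X a a') fam))) \<and>
        (\<forall>X. tr (carA d) (N X) = tr (carA d) X))"

definition chan_tensor_id :: "(('a \<Rightarrow> 'a \<Rightarrow> complex) \<Rightarrow> 'a \<Rightarrow> 'a \<Rightarrow> complex)
    \<Rightarrow> ('a \<times> 'b \<Rightarrow> 'a \<times> 'b \<Rightarrow> complex) \<Rightarrow> 'a \<times> 'b \<Rightarrow> 'a \<times> 'b \<Rightarrow> complex" where
  "chan_tensor_id N \<sigma> = (\<lambda>i j. N (\<lambda>x y. \<sigma> (x, snd i) (y, snd j)) (fst i) (fst j))"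

text \<open>Fidelity F(|psi><psi|, sigma) = <psi|sigma|psi> (first argument pure),
i.e. the success probability of projecting sigma onto psi.\<close>
definition fidelity_pure :: "'a set \<Rightarrow> ('a \<Rightarrow> complex) \<Rightarrow> ('a \<Rightarrow> 'a \<Rightarrow> complex) \<Rightarrow> real" where
  "fidelity_pure S \<psi> \<sigma> = Re (\<Sum>i\<in>S. \<Sum>j\<in>S. cnj (\<psi> i) * \<sigma> i j * \<psi> j)"

end

theory Submission
  imports Defs "HOL-Analysis.Convex"
begin

text \<open>
Hiding. Averaging over the uniformly random permutation \<pi> makes the announced label
uniform, so the entry of the commit channel at ((a, t), (a', t')) becomes
\<delta>(a, a') / d times the sum over k of <v k| \<rho>(t, t') |v k>, where v ranges over the
measured basis. Both the computational and the Fourier basis are orthonormal, so this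
is the block trace of \<rho> in either case: each commit channel replaces anc by the
maximally mixed state, whatever the committed bit.

Binding. Both honest states are supported on the GHZ diagonal |jjj> of Alice's
register; the amplitudes of \<Xi>^1 have modulus d^(-1/2) (one Bob label per j) and
those of \<Xi>^0 modulus at most 1/d, so for any two diagonal labels their overlap in
Bob's register is at most d^(-3/2). A separable channel is a mixture of product Kraus
operators K g \<otimes> L g, and the acceptance probability is the weighted sum of the
squared amplitudes <\<Xi>^(1-b)| K g \<otimes> L g \<otimes> I |\<Xi>^b>, each of which only sees the
diagonal entries K g j j' * L g (j, j) (j', j'). By Cauchy-Schwarz a squared amplitude
is at most d^(-3) times the product of the squared norms of these entries, and trace
preservation, applied to the product inputs |j1>|j2 j2>, bounds the weighted sum of
these products by d^2. Hence the acceptance probability is at most 1/d.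
\<close>

section \<open>Roots of unity and the Fourier basis\<close>

lemma ket_apply: "ket k x = (if x = k then 1 else 0)"
  by (simp add: ket_def)

lemma sum_powers_root_of_unity:
  fixes z :: "'a::field"
  assumes "z ^ n = 1"
  shows "(\<Sum>k<n. z ^ k) = (if z = 1 then of_nat n else 0)"
  using assms by (simp add: sum_gp_strict)

lemma omega_power: "omega d ^ k = cis (2 * pi * real k / real d)"
  by (simp add: omega_def DeMoivre mult_ac)

lemma norm_omega_power [simp]: "norm (omega d ^ k) = 1"
  by (simp add: omega_power)

lemma omega_nonzero [simp]: "omega d \<noteq> 0"
  by (simp add: omega_def)

lemma omega_power_order [simp]: "0 < d \<Longrightarrow> (omega d ^ k) ^ d = 1"
  by (simp add: omega_power DeMoivre cis_multiple_2pi)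

lemma omega_power_eq_iff:
  assumes "x < d" "y < d"
  shows "omega d ^ x = omega d ^ y \<longleftrightarrow> x = y"
proof -
  have "inj_on (\<lambda>k. cis (2 * pi * real k / real d)) {..<d}"
    using Complex.bij_betw_roots_unity[of d] assms by (simp add: bij_betw_def)
  from inj_on_eq_iff[OF this] show ?thesis
    using assms by (simp add: omega_power)
qed

lemma cnj_omega: "cnj (omega d) = inverse (omega d)"
  by (simp add: omega_def cis_inverse cis_cnj)

lemma fket_eq: "fket d k x = (if x < d then of_real (1 / sqrt (real d)) / omega d ^ (k * x) else 0)"
  by (simp add: fket_def ket_apply power_inverse divide_inverse if_distrib[of "\<lambda>z. _ * z"] cong: if_cong)

lemma fket_completeness:
  assumes "x < d" "y < d"
  shows "(\<Sum>k<d. cnj (fket d k y) * fket d k x) = (if x = y then 1 else 0)"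
proof -
  define z where "z = omega d ^ y / omega d ^ x"
  have "cnj (fket d k y) * fket d k x = of_real (1 / real d) * z ^ k" for k
  proof -
    have "of_real (sqrt (real d)) * of_real (sqrt (real d)) = (of_nat d :: complex)"
      by (simp flip: of_real_mult)
    then show ?thesis
      using assms by (simp add: fket_eq cnj_omega z_def power_divide power_inverse field_simps mult.commute
          flip: power_mult)
  qed
  then have "(\<Sum>k<d. cnj (fket d k y) * fket d k x) = of_real (1 / real d) * (\<Sum>k<d. z ^ k)"
    by (simp add: sum_distrib_left)
  also have "(\<Sum>k<d. z ^ k) = (if x = y then of_nat d else 0)"
  proof -
    have "z ^ d = 1"
      using assms by (simp add: z_def power_divide)
    moreover have "z = 1 \<longleftrightarrow> x = y"
      using assms by (auto simp: z_def omega_power_eq_iff)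
    ultimately show ?thesis
      by (simp add: sum_powers_root_of_unity)
  qed
  finally show ?thesis
    using assms by simp
qed

section \<open>Perfect hiding\<close>

lemma sum_permutations_apply_indep:
  assumes "a \<in> A" "c \<in> A"
  shows "(\<Sum>\<pi>\<in>{\<pi>. \<pi> permutes A}. h (\<pi> a)) = (\<Sum>\<pi>\<in>{\<pi>. \<pi> permutes A}. h (\<pi> c))"
proof -
  have "(\<Sum>\<pi>\<in>{\<pi>. \<pi> permutes A}. h (\<pi> c))
      = (\<Sum>\<pi>\<in>{\<pi>. \<pi> permutes A}. h ((\<pi> \<circ> transpose a c) c))"
    by (rule sum_permutations_compose_right[OF permutes_swap_id[OF assms]])
  then show ?thesis
    by simp
qed

lemma card_mult_sum_permutations_apply:
  fixes h :: "'a \<Rightarrow> 'b::{comm_semiring_1,semiring_char_0}"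
  assumes "finite A" "a \<in> A"
  shows "of_nat (card A) * (\<Sum>\<pi>\<in>{\<pi>. \<pi> permutes A}. h (\<pi> a)) = fact (card A) * (\<Sum>k\<in>A. h k)"
proof -
  have "of_nat (card A) * (\<Sum>\<pi>\<in>{\<pi>. \<pi> permutes A}. h (\<pi> a))
      = (\<Sum>c\<in>A. \<Sum>\<pi>\<in>{\<pi>. \<pi> permutes A}. h (\<pi> c))"
    using sum_permutations_apply_indep[OF _ assms(2), of _ h] by simp
  also have "\<dots> = (\<Sum>\<pi>\<in>{\<pi>. \<pi> permutes A}. \<Sum>c\<in>A. h (\<pi> c))"
    by (rule sum.swap)
  also have "\<dots> = (\<Sum>\<pi>\<in>{\<pi>. \<pi> permutes A}. \<Sum>k\<in>A. h k)"
  proof (rule sum.cong[OF refl])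
    fix \<pi> assume "\<pi> \<in> {\<pi>. \<pi> permutes A}"
    then show "(\<Sum>c\<in>A. h (\<pi> c)) = (\<Sum>k\<in>A. h k)"
      using sum.permute[of \<pi> A h] by (simp add: comp_def)
  qed
  also have "\<dots> = fact (card A) * (\<Sum>k\<in>A. h k)"
    using card_permutations[OF refl assms(1)] by simp
  finally show ?thesis .
qed

lemma kraus_sandwich_entry:
  assumes "finite T"
  shows "mmult ({..<d} \<times> T)
           (mmult ({..<d} \<times> T) (tensor_op (outer (ket m) v) (id_op T)) \<rho>)
           (tensor_op (outer v (ket m)) (id_op T)) (a, t) (a', t')
       = ket m a * ket m a' *
         (if t \<in> T \<and> t' \<in> T then (\<Sum>x<d. \<Sum>y<d. cnj (v y) * \<rho> (y, t) (x, t') * v x) else 0)"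
proof -
  have left: "mmult ({..<d} \<times> T) (tensor_op (outer (ket m) v) (id_op T)) \<rho> (a, t) j
      = ket m a * (if t \<in> T then (\<Sum>y<d. cnj (v y) * \<rho> (y, t) j) else 0)" for j
    using assms
    by (simp add: mmult_def tensor_op_def outer_def id_op_def sum.cartesian_product'
        if_distrib[of "\<lambda>z. _ * z"] sum_distrib_left mult_ac cong: if_cong)
  show ?thesis
  proof (cases "t \<in> T \<and> t' \<in> T")
    case True
    then show ?thesis
      unfolding mmult_def[of _ "mmult _ _ _"] left using assms
      by (simp add: tensor_op_def outer_def id_op_def ket_apply sum.cartesian_product'
          if_distrib[of "\<lambda>z. _ * z"] sum_distrib_left sum_distrib_right mult_ac
          sum.delta sum.delta' cong: if_cong)
  next
    case False
    then show ?thesis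
      unfolding mmult_def[of _ "mmult _ _ _"] left
      by (auto simp: tensor_op_def id_op_def intro!: sum.neutral)
  qed
qed

lemma trace_in_complete_basis:
  fixes v :: "nat \<Rightarrow> nat \<Rightarrow> complex" and R :: "nat \<Rightarrow> nat \<Rightarrow> complex"
  assumes "\<And>x y. x < d \<Longrightarrow> y < d \<Longrightarrow> (\<Sum>k<d. cnj (v k y) * v k x) = (if x = y then 1 else 0)"
  shows "(\<Sum>k<d. \<Sum>x<d. \<Sum>y<d. cnj (v k y) * R y x * v k x) = (\<Sum>k<d. R k k)"
proof -
  have "(\<Sum>k<d. \<Sum>x<d. \<Sum>y<d. cnj (v k y) * R y x * v k x)
      = (\<Sum>x<d. \<Sum>k<d. \<Sum>y<d. cnj (v k y) * R y x * v k x)"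
    by (rule sum.swap)
  also have "\<dots> = (\<Sum>x<d. \<Sum>y<d. \<Sum>k<d. cnj (v k y) * R y x * v k x)"
    by (rule sum.cong[OF refl], rule sum.swap)
  also have "\<dots> = (\<Sum>x<d. \<Sum>y<d. R y x * (\<Sum>k<d. cnj (v k y) * v k x))"
    by (simp add: sum_distrib_left mult_ac)
  also have "\<dots> = (\<Sum>x<d. R x x)"
    by (simp add: assms if_distrib[of "\<lambda>z. _ * z"] sum.delta cong: if_cong)
  finally show ?thesis .
qed

lemma bvec_completeness:
  assumes "x < d" "y < d"
  shows "(\<Sum>k<d. cnj (bvec d b k y) * bvec d b k x) = (if x = y then 1 else 0)"
  using assms fket_completeness
  by (cases "b = 0")
    (simp_all add: bvec_def ket_apply if_distrib[of cnj] if_distrib[of "\<lambda>z. z * _"] cong: if_cong)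

lemma sum_ket_ket:
  "(\<Sum>m<d. ket m a * ket m a' * f m) = (if a = a' \<and> a < d then f a else (0::complex))"
proof -
  have "(\<Sum>m<d. ket m a * ket m a' * f m) = (\<Sum>m<d. if m = a then (if a = a' then f m else 0) else 0)"
    by (rule sum.cong) (auto simp: ket_apply)
  then show ?thesis
    by simp
qed

lemma commit_chan_apply:
  assumes "finite T"
  shows "commit_chan d T b \<rho> (a, t) (a', t')
       = (if a = a' \<and> a < d \<and> t \<in> T \<and> t' \<in> T then (\<Sum>k<d. \<rho> (k, t) (k, t')) / of_nat d else 0)"
proof -
  define Q where "Q k = (\<Sum>x<d. \<Sum>y<d. cnj (bvec d b k y) * \<rho> (y, t) (x, t') * bvec d b k x)" for k
  have entry: "commit_chan d T b \<rho> (a, t) (a', t') = (\<Sum>\<pi>\<in>{\<pi>. \<pi> permutes {..<d}}.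
      \<Sum>m<d. ket m a * ket m a' * (if t \<in> T \<and> t' \<in> T then Q (\<pi> m) else 0)) / fact d"
    unfolding Q_def by (simp add: commit_chan_def kraus_sandwich_entry[OF assms])
  show ?thesis
  proof (cases "a = a' \<and> a < d \<and> t \<in> T \<and> t' \<in> T")
    case True
    have "of_nat d * (\<Sum>\<pi>\<in>{\<pi>. \<pi> permutes {..<d}}. Q (\<pi> a)) = fact d * (\<Sum>k<d. Q k)"
      using card_mult_sum_permutations_apply[of "{..<d}" a Q] True by simp
    also have "(\<Sum>k<d. Q k) = (\<Sum>k<d. \<rho> (k, t) (k, t'))"
      unfolding Q_def by (rule trace_in_complete_basis) (rule bvec_completeness)
    finally have "(\<Sum>\<pi>\<in>{\<pi>. \<pi> permutes {..<d}}. Q (\<pi> a)) / fact d = (\<Sum>k<d. \<rho> (k, t) (k, t')) / of_nat d"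
      using True by (simp add: field_simps)
    then show ?thesis
      unfolding entry using True by (simp add: sum_ket_ket)
  qed (unfold entry, auto simp: sum_ket_ket intro!: sum.neutral)
qed

lemma commit_chan_bit_independent:
  assumes "finite T"
  shows "commit_chan d T b \<rho> = commit_chan d T b' \<rho>"
proof (intro ext)
  fix i j
  show "commit_chan d T b \<rho> i j = commit_chan d T b' \<rho> i j"
    by (cases i, cases j) (simp only: commit_chan_apply[OF assms])
qed

section \<open>Support of the honest post-commit states\<close>

lemma finite_carA [simp]: "finite (carA d)"
  by (simp add: carA_def)

definition diag3 :: "nat \<Rightarrow> nat \<times> nat \<times> nat \<Rightarrow> bool" where
  "diag3 d a \<longleftrightarrow> (\<exists>j<d. a = (j, j, j))"

lemma sum_diag3:
  "(\<Sum>a\<in>carA d. if diag3 d a then g a else 0) = (\<Sum>j<d. g (j, j, j))"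
proof -
  have "{a \<in> carA d. diag3 d a} = (\<lambda>j. (j, j, j)) ` {..<d}"
    by (auto simp: carA_def diag3_def)
  then have "(\<Sum>a\<in>carA d. if diag3 d a then g a else 0) = sum g ((\<lambda>j. (j, j, j)) ` {..<d})"
    by (simp add: carA_def flip: sum.inter_filter)
  also have "\<dots> = (\<Sum>j<d. g (j, j, j))"
    by (simp add: sum.reindex inj_on_def)
  finally show ?thesis .
qed

lemma Phi_apply:
  "Phi d l (a, t) = (if diag3 d a \<and> t = (fst a + l) mod d
     then of_real (1 / sqrt (real d)) * omega d ^ (fst a * l) else 0)"
proof -
  obtain a1 a2 a3 where a: "a = (a1, a2, a3)"
    by (cases a)
  have "(\<Sum>j<d. omega d ^ (j * l) * ket3 j a * ket ((j + l) mod d) t)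
      = (\<Sum>j<d. if j = a1 then (if a2 = a1 \<and> a3 = a1 \<and> t = (a1 + l) mod d then omega d ^ (a1 * l) else 0) else 0)"
    by (rule sum.cong) (auto simp: a ket3_def ket_apply)
  then show ?thesis
    by (auto simp: Phi_def a diag3_def)
qed

lemma norm_Phi:
  "norm (Phi d l (a, t)) = (if diag3 d a \<and> t = (fst a + l) mod d then 1 / sqrt (real d) else 0)"
  by (simp add: Phi_apply norm_mult norm_divide)

lemma inj_on_add_mod:
  fixes x d :: nat
  shows "inj_on (\<lambda>l. (x + l) mod d) {..<d}"
proof (rule inj_onI)
  have recover: "int l = (int ((x + l) mod d) - int x) mod int d" if "l < d" for l
    using that by (simp add: of_nat_mod mod_diff_left_eq)
  fix l l' assume "l \<in> {..<d}" "l' \<in> {..<d}" and eq: "(x + l) mod d = (x + l') mod d"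
  then have "int l = int l'"
    by (subst (1 2) recover) (simp_all only: eq lessThan_iff)
  then show "l = l'"
    by simp
qed

lemma norm_Xi0_le: "norm (Xi d 0 \<pi> m (a, t)) \<le> (if diag3 d a then 1 / real d else 0)"
proof -
  let ?L = "{l \<in> {..<d}. (fst a + l) mod d = t}"
  have "norm (Xi d 0 \<pi> m (a, t)) \<le> 1 / sqrt (real d) * (\<Sum>l<d. norm (Phi d l (a, t)))"
    unfolding Xi_def using norm_sum[of "\<lambda>l. omega d ^ (\<pi> m * l) * Phi d l (a, t)" "{..<d}"]
    by (simp add: norm_mult norm_divide divide_right_mono)
  also have "(\<Sum>l<d. norm (Phi d l (a, t))) = (if diag3 d a then 1 / sqrt (real d) * card ?L else 0)"
    by (simp add: norm_Phi eq_commute[of t] flip: sum.inter_filter)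
  also have "1 / sqrt (real d) * \<dots> \<le> (if diag3 d a then 1 / real d else 0)"
  proof -
    have "?L = (\<lambda>l. (fst a + l) mod d) -` {t} \<inter> {..<d}"
      by auto
    then have "card ?L \<le> 1"
      using card_vimage_inj_on_le[OF inj_on_add_mod, of "{t}"] by simp
    then show ?thesis
      by (auto simp: real_sqrt_mult_self divide_right_mono simp flip: mult.assoc)
  qed
  finally show ?thesis
    by simp
qed

lemma Phi_Xi0_overlap_le:
  "(\<Sum>t<d. norm (Phi d l (a, t)) * norm (Xi d 0 \<pi> m (b, t)))
     \<le> (if diag3 d a \<and> diag3 d b then 1 / (real d * sqrt (real d)) else 0)"
proof -
  have "(\<Sum>t<d. norm (Phi d l (a, t)) * norm (Xi d 0 \<pi> m (b, t)))
      \<le> (\<Sum>t<d. (if diag3 d a \<and> t = (fst a + l) mod d then 1 / sqrt (real d) else 0)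
                 * (if diag3 d b then 1 / real d else 0))"
    by (intro sum_mono mult_mono norm_Xi0_le) (simp_all add: norm_Phi)
  also have "\<dots> \<le> (if diag3 d a \<and> diag3 d b then 1 / (real d * sqrt (real d)) else 0)"
    by (simp add: if_distrib[of "\<lambda>z. z * _"] sum.delta' cong: if_cong)
  finally show ?thesis .
qed

section \<open>Product Kraus channels and honest binding\<close>

lemma mmult_sandwich_outer:
  "mmult S (mmult S M (outer u v)) (adj M) a a' = (\<Sum>b\<in>S. M a b * u b) * cnj (\<Sum>c\<in>S. M a' c * v c)"
proof -
  have "mmult S (mmult S M (outer u v)) (adj M) a a'
      = (\<Sum>c\<in>S. \<Sum>b\<in>S. M a b * u b * (cnj (M a' c) * cnj (v c)))"
    unfolding mmult_def adj_def outer_def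
    by (rule sum.cong[OF refl]) (simp add: sum_distrib_left sum_distrib_right mult_ac)
  also have "\<dots> = (\<Sum>b\<in>S. \<Sum>c\<in>S. M a b * u b * (cnj (M a' c) * cnj (v c)))"
    by (rule sum.swap)
  also have "\<dots> = (\<Sum>b\<in>S. M a b * u b) * cnj (\<Sum>c\<in>S. M a' c * v c)"
    by (simp add: sum_product)
  finally show ?thesis .
qed

lemma quadratic_form_mixture:
  fixes Y :: "'i \<Rightarrow> complex" and w :: "'g \<Rightarrow> 'i \<Rightarrow> complex"
  shows "(\<Sum>i\<in>S. \<Sum>j\<in>S. cnj (Y i) * (\<Sum>g\<in>G. of_real (c g) * (w g i * cnj (w g j))) * Y j)
       = of_real (\<Sum>g\<in>G. c g * (norm (\<Sum>i\<in>S. cnj (Y i) * w g i))\<^sup>2)"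
proof -
  have "(\<Sum>i\<in>S. \<Sum>j\<in>S. cnj (Y i) * (\<Sum>g\<in>G. of_real (c g) * (w g i * cnj (w g j))) * Y j)
      = (\<Sum>g\<in>G. \<Sum>i\<in>S. \<Sum>j\<in>S. of_real (c g) * (cnj (Y i) * w g i * cnj (cnj (Y j) * w g j)))"
    by (simp add: sum_distrib_left sum_distrib_right mult_ac sum.swap[where A = S and B = G]
        sum.swap[where B = G])
  also have "\<dots> = (\<Sum>g\<in>G. of_real (c g) * ((\<Sum>i\<in>S. cnj (Y i) * w g i) * cnj (\<Sum>i\<in>S. cnj (Y i) * w g i)))"
    by (rule sum.cong[OF refl]) (simp add: sum_product sum_distrib_left mult_ac)
  also have "\<dots> = of_real (\<Sum>g\<in>G. c g * (norm (\<Sum>i\<in>S. cnj (Y i) * w g i))\<^sup>2)"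
    by (simp only: complex_norm_square of_real_mult of_real_sum)
  finally show ?thesis .
qed

lemma Cauchy_Schwarz_double_sum:
  fixes u v :: "'a \<Rightarrow> 'b \<Rightarrow> 'c::linordered_field"
  shows "(\<Sum>x\<in>A. \<Sum>y\<in>B. u x y * v x y)\<^sup>2
    \<le> (\<Sum>x\<in>A. \<Sum>y\<in>B. (u x y)\<^sup>2) * (\<Sum>x\<in>A. \<Sum>y\<in>B. (v x y)\<^sup>2)"
  using Cauchy_Schwarz_ineq_sum[of "\<lambda>(x, y). u x y" "\<lambda>(x, y). v x y" "A \<times> B"]
  by (simp add: sum.cartesian_product')

lemma overlap_le_diagonal_norm_sum:
  fixes X Y :: "(nat \<times> nat \<times> nat) \<times> nat \<Rightarrow> complex"
  assumes overlap: "\<And>a b. (\<Sum>t<d. norm (Y (a, t)) * norm (X (b, t))) \<le> (if diag3 d a \<and> diag3 d b then \<kappa> else 0)"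
    and "0 \<le> \<kappa>"
  shows "norm (\<Sum>i\<in>carAB d. cnj (Y i) * (\<Sum>b\<in>carA d. M (fst i) b * X (b, snd i)))
     \<le> \<kappa> * (\<Sum>j<d. \<Sum>j'<d. norm (M (j, j, j) (j', j', j')))"
proof -
  have "norm (\<Sum>i\<in>carAB d. cnj (Y i) * (\<Sum>b\<in>carA d. M (fst i) b * X (b, snd i)))
      \<le> (\<Sum>i\<in>carAB d. norm (Y i) * (\<Sum>b\<in>carA d. norm (M (fst i) b) * norm (X (b, snd i))))"
    by (rule order_trans[OF norm_sum], rule sum_mono)
      (simp add: norm_mult mult_left_mono norm_sum[THEN order_trans] sum_mono)
  also have "\<dots> = (\<Sum>a\<in>carA d. \<Sum>b\<in>carA d. norm (M a b) * (\<Sum>t<d. norm (Y (a, t)) * norm (X (b, t))))"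
    by (simp add: carAB_def sum.cartesian_product' sum_distrib_left sum_distrib_right mult_ac
        sum.swap[where A = "{..<d}"])
  also have "\<dots> \<le> (\<Sum>a\<in>carA d. \<Sum>b\<in>carA d. norm (M a b) * (if diag3 d a \<and> diag3 d b then \<kappa> else 0))"
    by (intro sum_mono mult_left_mono overlap) simp
  also have "\<dots> = (\<Sum>a\<in>carA d. if diag3 d a then (\<Sum>b\<in>carA d. if diag3 d b then \<kappa> * norm (M a b) else 0) else 0)"
    by (rule sum.cong[OF refl]) (auto intro: sum.cong)
  also have "\<dots> = \<kappa> * (\<Sum>j<d. \<Sum>j'<d. norm (M (j, j, j) (j', j', j')))"
    by (simp add: sum_diag3 sum_distrib_left)
  finally show ?thesis .
qed

definition embed3 :: "nat \<Rightarrow> nat \<Rightarrow> nat \<Rightarrow> nat \<times> nat \<times> nat" where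
  "embed3 s x y = (if s = 0 then (x, y, y) else if s = 1 then (y, x, y) else (y, y, x))"

lemma split3_embed3: "split3 s (embed3 s x y) = (x, y, y)"
  by (simp add: split3_def embed3_def)

lemma embed3_in_carA: "x < d \<Longrightarrow> y < d \<Longrightarrow> embed3 s x y \<in> carA d"
  by (simp add: embed3_def carA_def)

lemma inj_on_embed3: "inj_on (\<lambda>(x, y). embed3 s x y) A"
  by (rule inj_onI) (metis (mono_tags, lifting) case_prod_beta prod.inject prod_eq_iff split3_embed3)

lemma prod_op_embed3: "prod_op s K L (embed3 s x y) (embed3 s x' y') = K x x' * L (y, y) (y', y')"
  by (simp add: prod_op_def split3_embed3)

lemma prod_op_diag: "prod_op s K L (j, j, j) (j', j', j') = K j j' * L (j, j) (j', j')"
  by (simp add: prod_op_def split3_def)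

locale product_kraus_channel =
  fixes d s :: nat
    and N :: "(nat \<times> nat \<times> nat \<Rightarrow> nat \<times> nat \<times> nat \<Rightarrow> complex)
      \<Rightarrow> nat \<times> nat \<times> nat \<Rightarrow> nat \<times> nat \<times> nat \<Rightarrow> complex"
    and G :: "'g set" and c :: "'g \<Rightarrow> real"
    and K :: "'g \<Rightarrow> nat \<Rightarrow> nat \<Rightarrow> complex"
    and L :: "'g \<Rightarrow> nat \<times> nat \<Rightarrow> nat \<times> nat \<Rightarrow> complex"
  assumes channel_eq: "\<And>Z. N Z = (\<lambda>a a'. \<Sum>g\<in>G. of_real (c g) *
      mmult (carA d) (mmult (carA d) (prod_op s (K g) (L g)) Z) (adj (prod_op s (K g) (L g))) a a')"
    and weights_nonneg: "\<And>g. g \<in> G \<Longrightarrow> 0 \<le> c g"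
    and trace_preserving: "\<And>Z. tr (carA d) (N Z) = tr (carA d) Z"
begin

definition K_mass :: "'g \<Rightarrow> real" where
  "K_mass g = (\<Sum>j<d. \<Sum>x<d. (norm (K g x j))\<^sup>2)"

definition L_diag_mass :: "'g \<Rightarrow> real" where
  "L_diag_mass g = (\<Sum>j<d. \<Sum>y<d. (norm (L g (y, y) (j, j)))\<^sup>2)"

lemma column_norm_sum_eq_1:
  assumes "a0 \<in> carA d"
  shows "(\<Sum>g\<in>G. c g * (\<Sum>a\<in>carA d. (norm (prod_op s (K g) (L g) a a0))\<^sup>2)) = 1"
proof -
  define e :: "nat \<times> nat \<times> nat \<Rightarrow> complex" where "e x = (if x = a0 then 1 else 0)" for x
  have e_apply: "(\<Sum>b\<in>carA d. M a b * e b) = M a a0"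
    for M :: "nat \<times> nat \<times> nat \<Rightarrow> nat \<times> nat \<times> nat \<Rightarrow> complex" and a
    using assms by (simp add: e_def if_distrib[of "\<lambda>z. _ * z"] cong: if_cong)
  have "of_real (\<Sum>g\<in>G. c g * (\<Sum>a\<in>carA d. (norm (prod_op s (K g) (L g) a a0))\<^sup>2))
      = tr (carA d) (N (outer e e))"
    by (simp add: tr_def channel_eq mmult_sandwich_outer e_apply sum_distrib_left
        sum.swap[where A = "carA d"] flip: complex_norm_square)
  also have "\<dots> = 1"
    unfolding trace_preserving using assms
    by (simp add: tr_def outer_def e_def if_distrib[of cnj] if_distrib[of "\<lambda>z. z * _"] cong: if_cong)
  finally show ?thesis
    by (simp only: of_real_eq_1_iff)
qed

text \<open>Trace preservation at the input embed3 s j1 j2, restricted to the outputs embed3 s x y.\<close>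

lemma factor_column_norm_le_1:
  assumes "j1 < d" "j2 < d"
  shows "(\<Sum>g\<in>G. c g * ((\<Sum>x<d. (norm (K g x j1))\<^sup>2) * (\<Sum>y<d. (norm (L g (y, y) (j2, j2)))\<^sup>2))) \<le> 1"
proof -
  let ?a0 = "embed3 s j1 j2"
  have "(\<Sum>x<d. (norm (K g x j1))\<^sup>2) * (\<Sum>y<d. (norm (L g (y, y) (j2, j2)))\<^sup>2)
      \<le> (\<Sum>a\<in>carA d. (norm (prod_op s (K g) (L g) a ?a0))\<^sup>2)" for g
  proof -
    let ?E = "(\<lambda>(x, y). embed3 s x y) ` ({..<d} \<times> {..<d})"
    have "(\<Sum>x<d. (norm (K g x j1))\<^sup>2) * (\<Sum>y<d. (norm (L g (y, y) (j2, j2)))\<^sup>2)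
        = (\<Sum>(x, y)\<in>{..<d} \<times> {..<d}. (norm (prod_op s (K g) (L g) (embed3 s x y) ?a0))\<^sup>2)"
      by (simp add: sum_product sum.cartesian_product prod_op_embed3 norm_mult power_mult_distrib)
    also have "\<dots> = (\<Sum>a\<in>?E. (norm (prod_op s (K g) (L g) a ?a0))\<^sup>2)"
      by (subst sum.reindex[OF inj_on_embed3]) (simp add: comp_def case_prod_beta')
    also have "\<dots> \<le> (\<Sum>a\<in>carA d. (norm (prod_op s (K g) (L g) a ?a0))\<^sup>2)"
      by (rule sum_mono2) (auto simp: embed3_in_carA)
    finally show ?thesis .
  qed
  then have "(\<Sum>g\<in>G. c g * ((\<Sum>x<d. (norm (K g x j1))\<^sup>2) * (\<Sum>y<d. (norm (L g (y, y) (j2, j2)))\<^sup>2)))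
      \<le> (\<Sum>g\<in>G. c g * (\<Sum>a\<in>carA d. (norm (prod_op s (K g) (L g) a ?a0))\<^sup>2))"
    by (intro sum_mono mult_left_mono weights_nonneg)
  also have "\<dots> = 1"
    by (rule column_norm_sum_eq_1) (rule embed3_in_carA[OF assms])
  finally show ?thesis .
qed

lemma factor_norm_le: "(\<Sum>g\<in>G. c g * (K_mass g * L_diag_mass g)) \<le> real d * real d"
proof -
  define a where "a g j = (\<Sum>x<d. (norm (K g x j))\<^sup>2)" for g j
  define b where "b g j = (\<Sum>y<d. (norm (L g (y, y) (j, j)))\<^sup>2)" for g j
  have "(\<Sum>g\<in>G. c g * (K_mass g * L_diag_mass g)) = (\<Sum>j1<d. \<Sum>j2<d. \<Sum>g\<in>G. c g * (a g j1 * b g j2))"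
    unfolding K_mass_def L_diag_mass_def a_def[symmetric] b_def[symmetric]
    by (simp only: sum_product) (simp only: sum_distrib_left sum.swap[where A = G])
  also have "\<dots> \<le> (\<Sum>j1<d. \<Sum>j2<d. 1)"
    unfolding a_def b_def by (intro sum_mono factor_column_norm_le_1) auto
  finally show ?thesis
    by simp
qed

lemma fidelity_eq:
  "fidelity_pure (carAB d) Y (chan_tensor_id N (outer X X))
     = (\<Sum>g\<in>G. c g * (norm (\<Sum>i\<in>carAB d. cnj (Y i) *
          (\<Sum>b\<in>carA d. prod_op s (K g) (L g) (fst i) b * X (b, snd i))))\<^sup>2)"
proof -
  define w where "w g i = (\<Sum>b\<in>carA d. prod_op s (K g) (L g) (fst i) b * X (b, snd i))" for g i
  have entry: "chan_tensor_id N (outer X X) i j = (\<Sum>g\<in>G. of_real (c g) * (w g i * cnj (w g j)))" for i j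
    using mmult_sandwich_outer[of "carA d" _ "\<lambda>x. X (x, snd i)" "\<lambda>y. X (y, snd j)"]
    by (simp add: chan_tensor_id_def channel_eq w_def outer_def)
  show ?thesis
    unfolding fidelity_pure_def entry quadratic_form_mixture Re_complex_of_real w_def ..
qed

lemma amplitude_sq_le:
  fixes X Y :: "(nat \<times> nat \<times> nat) \<times> nat \<Rightarrow> complex"
  assumes overlap: "\<And>a b. (\<Sum>t<d. norm (Y (a, t)) * norm (X (b, t))) \<le> (if diag3 d a \<and> diag3 d b then \<kappa> else 0)"
    and "0 \<le> \<kappa>"
  shows "(norm (\<Sum>i\<in>carAB d. cnj (Y i) * (\<Sum>b\<in>carA d. prod_op s (K g) (L g) (fst i) b * X (b, snd i))))\<^sup>2
    \<le> \<kappa>\<^sup>2 * (K_mass g * L_diag_mass g)"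
proof -
  let ?z = "\<Sum>i\<in>carAB d. cnj (Y i) * (\<Sum>b\<in>carA d. prod_op s (K g) (L g) (fst i) b * X (b, snd i))"
  let ?S = "\<Sum>j<d. \<Sum>j'<d. norm (K g j j') * norm (L g (j, j) (j', j'))"
  have "(\<Sum>j<d. \<Sum>j'<d. norm (prod_op s (K g) (L g) (j, j, j) (j', j', j'))) = ?S"
    by (simp only: prod_op_diag norm_mult)
  then have "norm ?z \<le> \<kappa> * ?S"
    using overlap_le_diagonal_norm_sum[where X = X and Y = Y and M = "prod_op s (K g) (L g)",
        OF overlap \<open>0 \<le> \<kappa>\<close>]
    by simp
  then have "(norm ?z)\<^sup>2 \<le> (\<kappa> * ?S)\<^sup>2"
    by (rule power_mono) simp
  also have "\<dots> = \<kappa>\<^sup>2 * ?S\<^sup>2"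
    by (rule power_mult_distrib)
  also have "\<dots> \<le> \<kappa>\<^sup>2 *
      ((\<Sum>j<d. \<Sum>j'<d. (norm (K g j j'))\<^sup>2) * (\<Sum>j<d. \<Sum>j'<d. (norm (L g (j, j) (j', j')))\<^sup>2))"
    by (rule mult_left_mono[OF Cauchy_Schwarz_double_sum]) simp
  also have "\<dots> = \<kappa>\<^sup>2 * (K_mass g * L_diag_mass g)"
    unfolding K_mass_def L_diag_mass_def by (subst (1 2) sum.swap) (rule refl)
  finally show ?thesis .
qed

lemma fidelity_le:
  fixes X Y :: "(nat \<times> nat \<times> nat) \<times> nat \<Rightarrow> complex"
  assumes overlap: "\<And>a b. (\<Sum>t<d. norm (Y (a, t)) * norm (X (b, t))) \<le> (if diag3 d a \<and> diag3 d b then \<kappa> else 0)"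
    and "0 \<le> \<kappa>"
  shows "fidelity_pure (carAB d) Y (chan_tensor_id N (outer X X)) \<le> (\<kappa> * real d)\<^sup>2"
proof -
  have "fidelity_pure (carAB d) Y (chan_tensor_id N (outer X X))
      \<le> (\<Sum>g\<in>G. c g * (\<kappa>\<^sup>2 * (K_mass g * L_diag_mass g)))"
    unfolding fidelity_eq
    by (intro sum_mono mult_left_mono amplitude_sq_le[where X = X and Y = Y, OF overlap \<open>0 \<le> \<kappa>\<close>]
        weights_nonneg)
  also have "\<dots> = \<kappa>\<^sup>2 * (\<Sum>g\<in>G. c g * (K_mass g * L_diag_mass g))"
    by (simp add: sum_distrib_left mult_ac)
  also have "\<dots> \<le> \<kappa>\<^sup>2 * (real d * real d)"
    by (intro mult_left_mono factor_norm_le) simp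
  also have "\<dots> = (\<kappa> * real d)\<^sup>2"
    by (simp add: power_mult_distrib power2_eq_square)
  finally show ?thesis .
qed

end

lemma separable_channel_product_kraus:
  assumes "separable_channel d N"
  obtains s and G :: "(nat \<times> nat \<times> nat) set" and c K L where "product_kraus_channel d s N G c K L"
proof -
  from assms obtain s fam where
    weights: "\<forall>(p, Ks, Ls) \<in> set fam. p \<ge> 0" and
    N_eq: "\<forall>X. N X = (\<lambda>a a'. sum_list (map (\<lambda>(p, Ks, Ls). complex_of_real p * prod_map d s Ks Ls X a a') fam))" and
    trace: "\<forall>X. tr (carA d) (N X) = tr (carA d) X"
    unfolding separable_channel_def by blast
  \<comment> \<open>(f, u, v) indexes the u-th K-operator and the v-th L-operator of the f-th member of fam\<close>
  define G where "G = (SIGMA f:{..<length fam}. SIGMA u:{..<length (fst (snd (fam ! f)))}. {..<length (snd (snd (fam ! f)))})"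
  define c where "c g = fst (fam ! fst g)" for g :: "nat \<times> nat \<times> nat"
  define K where "K g = fst (snd (fam ! fst g)) ! fst (snd g)" for g :: "nat \<times> nat \<times> nat"
  define L where "L g = snd (snd (fam ! fst g)) ! snd (snd g)" for g :: "nat \<times> nat \<times> nat"
  have sum_list_map: "sum_list (map f xs) = (\<Sum>i<length xs. f (xs ! i))" for f :: "_ \<Rightarrow> complex" and xs
    by (simp add: sum_list_sum_nth atLeast0LessThan)
  have "product_kraus_channel d s N G c K L"
  proof
    show "0 \<le> c g" if "g \<in> G" for g
    proof -
      from that have "fam ! fst g \<in> set fam"
        by (auto simp: G_def)
      then show ?thesis
        using weights unfolding c_def by (metis (no_types, lifting) case_prodD prod.collapse)
    qed
    show "N Z = (\<lambda>a a'. \<Sum>g\<in>G. of_real (c g) *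
        mmult (carA d) (mmult (carA d) (prod_op s (K g) (L g)) Z) (adj (prod_op s (K g) (L g))) a a')" for Z
      unfolding N_eq[rule_format] sum_list_map prod_map_def G_def c_def K_def L_def
      by (simp add: split_def sum_distrib_left sum.Sigma)
    show "tr (carA d) (N Z) = tr (carA d) Z" for Z
      using trace by blast
  qed
  then show ?thesis
    by (rule that)
qed

lemma Xi_overlap_le:
  assumes "b \<le> 1"
  shows "(\<Sum>t<d. norm (Xi d (1 - b) \<pi>' m (a, t)) * norm (Xi d b \<pi> m (a', t)))
     \<le> (if diag3 d a \<and> diag3 d a' then 1 / (real d * sqrt (real d)) else 0)"
proof (cases "b = 0")
  case True
  then show ?thesis
    using Phi_Xi0_overlap_le[of d "\<pi>' m" a \<pi> m a'] by (simp add: Xi_def)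
next
  case False
  with assms have "b = 1"
    by simp
  then show ?thesis
    using Phi_Xi0_overlap_le[of d "\<pi> m" a' \<pi>' m a] by (simp add: Xi_def mult.commute conj_commute)
qed

theorem theorem1:
  fixes d :: nat
  assumes "d \<ge> 2"
  shows "(\<forall>(T :: 'r set) \<rho>. finite T \<and> T \<noteq> {} \<and> density ({..<d} \<times> T) \<rho> \<longrightarrow>
            commit_chan d T 0 \<rho> = commit_chan d T 1 \<rho>) \<and>
         (\<forall>b \<pi> m \<pi>' N. b \<le> 1 \<and> \<pi> permutes {..<d} \<and> m < d \<and> \<pi>' permutes {..<d} \<and>
            separable_channel d N \<longrightarrow>
            fidelity_pure (carAB d) (Xi d (1 - b) \<pi>' m)
               (chan_tensor_id N (outer (Xi d b \<pi> m) (Xi d b \<pi> m))) \<le> 1 / real d)"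
proof (intro conjI allI impI)
  fix T :: "'r set" and \<rho>
  assume "finite T \<and> T \<noteq> {} \<and> density ({..<d} \<times> T) \<rho>"
  then have "finite T"
    by simp
  then show "commit_chan d T 0 \<rho> = commit_chan d T 1 \<rho>"
    by (rule commit_chan_bit_independent)
next
  fix b m :: nat and \<pi> \<pi>' :: "nat \<Rightarrow> nat" and N
  assume hyps: "b \<le> 1 \<and> \<pi> permutes {..<d} \<and> m < d \<and> \<pi>' permutes {..<d} \<and> separable_channel d N"
  then have "b \<le> 1" and "separable_channel d N"
    by simp_all
  then obtain s and G :: "(nat \<times> nat \<times> nat) set" and c K L where kraus: "product_kraus_channel d s N G c K L"
    using separable_channel_product_kraus by blast
  have "fidelity_pure (carAB d) (Xi d (1 - b) \<pi>' m) (chan_tensor_id N (outer (Xi d b \<pi> m) (Xi d b \<pi> m)))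
      \<le> (1 / (real d * sqrt (real d)) * real d)\<^sup>2"
    by (rule product_kraus_channel.fidelity_le[where X = "Xi d b \<pi> m" and Y = "Xi d (1 - b) \<pi>' m", OF kraus
          Xi_overlap_le[OF \<open>b \<le> 1\<close>]]) simp
  also have "\<dots> = 1 / real d"
    using assms by (simp add: power2_eq_square)
  finally show "fidelity_pure (carAB d) (Xi d (1 - b) \<pi>' m)
      (chan_tensor_id N (outer (Xi d b \<pi> m) (Xi d b \<pi> m))) \<le> 1 / real d" .
qed

end
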